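(* $\mathbf{E}[\lfloor r/2\rfloor] = 2/3 \pm O(1/i)$ and $\mathbf{E}[\lceil r/2 \rceil] = 4/3 \pm O(1/i)$.
   Context: In 2Merge$(A,B,T)$ with $T=(t_1,\dots,t_{i-2})$ sorted, $i$ even, $i\ge4$, after ensuring $A<B$, Step 2 compares $A$ with $t_{\lceil(1-2^{-r/2})i\rceil}$ for $r=1,2,\dots$ up to $2\lg i$ and stops at the first $r$ with $A<t_{\lceil(1-2^{-r/2})i\rceil}$; $r$ denotes this number of comparisons. The two inserted elements occupy uniformly random distinct positions among the $i$ positions, so given $A<B$, $\mathbf{Pr}[t_{\ell-1}<A<t_\ell]=(i-\ell)/\binom{i}{2}$; consequently $\mathbf{Pr}[r]=2^{-r}\pm O\!\left(\frac{1}{2^{r/2}i}\right)$. The expectations are over this distribution of $r$. *)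

theory Defs
  imports Complex_Main
begin

text \<open>Index of the r-th probe in Step 2 of 2Merge: ceiling((1 - 2^(-r/2)) i).\<close>
definition probe_index :: "nat \<Rightarrow> nat \<Rightarrow> int" where
  "probe_index i r = \<lceil>(1 - 2 powr (- real r / 2)) * real i\<rceil>"

definition max_probes :: "nat \<Rightarrow> nat" where
  "max_probes i = nat \<lfloor>2 * log 2 (real i)\<rfloor>"

text \<open>Number of comparisons r in Step 2 when t_(l-1) < A < t_l:
  A < t_k iff l \<le> k, so Step 2 stops at the first r with l \<le> probe_index i r,
  and in any case after max_probes i comparisons.\<close>
definition num_cmp :: "nat \<Rightarrow> nat \<Rightarrow> nat" where
  "num_cmp i l = (LEAST r. 1 \<le> r \<and> (int l \<le> probe_index i r \<or> max_probes i \<le> r))"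

text \<open>Pr[t_(l-1) < A < t_l] = (i - l) / (i choose 2), for l = 1..i-1.\<close>
definition pos_prob :: "nat \<Rightarrow> nat \<Rightarrow> real" where
  "pos_prob i l = (real i - real l) / real (i choose 2)"

definition expect_r :: "nat \<Rightarrow> (nat \<Rightarrow> real) \<Rightarrow> real" where
  "expect_r i g = (\<Sum>l = 1..i - 1. pos_prob i l * g (num_cmp i l))"

end

theory Submission
  imports Defs
begin

text \<open>
  Write \<open>v\<^sub>s = 2\<^sup>-\<^sup>s\<^sup>/\<^sup>2\<close>, so the \<open>s\<close>-th probe sits \<open>m\<^sub>s = \<lfloor>v\<^sub>s i\<rfloor>\<close> positions from the end.
  More than \<open>s\<close> comparisons are made exactly when \<open>A\<close> lies in the last \<open>m\<^sub>s\<close> positions,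
  which happens with probability \<open>m\<^sub>s(m\<^sub>s - 1)/(i(i - 1)) = v\<^sub>s\<^sup>2 \<plusminus> O(v\<^sub>s/i) = 2\<^sup>-\<^sup>s \<plusminus> O(v\<^sub>s/i)\<close>;
  the cut-off after \<open>2 lg i\<close> probes only costs \<open>O(1/i)\<close>. Writing \<open>\<lfloor>r/2\<rfloor>\<close> and \<open>\<lceil>r/2\<rceil>\<close> as
  sums of the indicators \<open>[2k + 1 < r]\<close> resp. \<open>[2k < r]\<close> turns both expectations into sums of
  these tail probabilities. The main terms are geometric series with sums \<open>2/3\<close> and \<open>4/3\<close>,
  and the errors \<open>O(v\<^sub>2\<^sub>k/i) = O(2\<^sup>-\<^sup>k/i)\<close> add up to \<open>O(1/i)\<close>.
\<close>

definition probe_frac :: "nat \<Rightarrow> real" where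
  "probe_frac s = 2 powr (- real s / 2)"

lemma probe_frac_pos: "0 < probe_frac s"
  by (simp add: probe_frac_def)

lemma probe_frac_antimono: "s \<le> s' \<Longrightarrow> probe_frac s' \<le> probe_frac s"
  unfolding probe_frac_def by (auto intro: powr_mono simp: divide_simps)

lemma probe_frac_le_1: "probe_frac s \<le> 1"
  using probe_frac_antimono[of 0 s] by (simp add: probe_frac_def)

lemma probe_frac_squared: "probe_frac s ^ 2 = (1/2) ^ s"
proof -
  have "probe_frac s ^ 2 = 2 powr (- real s)"
    unfolding probe_frac_def power2_eq_square by (simp add: powr_add[symmetric])
  then show ?thesis
    by (simp add: powr_minus powr_realpow power_one_over inverse_eq_divide)
qed

lemma probe_frac_double: "probe_frac (2 * k) = (1/2) ^ k"
proof -
  have "probe_frac (2 * k) = 2 powr (- real k)"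
    unfolding probe_frac_def by simp
  then show ?thesis
    by (simp add: powr_minus powr_realpow power_one_over inverse_eq_divide)
qed

lemma probe_index_eq: "probe_index i s = int i - \<lfloor>probe_frac s * real i\<rfloor>"
proof -
  have "probe_index i s = \<lceil>of_int (int i) - probe_frac s * real i\<rceil>"
    unfolding probe_index_def probe_frac_def by (simp add: algebra_simps)
  also have "\<dots> = int i - \<lfloor>probe_frac s * real i\<rfloor>"
    by (metis ceiling_add_of_int ceiling_minus uminus_add_conv_diff)
  finally show ?thesis .
qed

lemma probe_index_mono: "s \<le> s' \<Longrightarrow> probe_index i s \<le> probe_index i s'"
  unfolding probe_index_eq
  using probe_frac_antimono[of s s'] by (simp add: floor_mono mult_right_mono)

lemma max_probes_bounds:
  assumes "4 \<le> i"
  shows "2 \<le> max_probes i" "(real i)\<^sup>2 \<le> 2 * 2 ^ max_probes i"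
proof -
  let ?N = "max_probes i"
  have i4: "4 \<le> real i" using assms by simp
  have "log 2 4 \<le> log 2 (real i)" using i4 by simp
  moreover have "log 2 (4::real) = 2"
    by (metis log2_of_power_eq mult_2 numeral_Bit0 of_nat_numeral power2_eq_square)
  ultimately have lg: "2 \<le> log 2 (real i)" by simp
  have N: "real ?N = of_int \<lfloor>2 * log 2 (real i)\<rfloor>"
    unfolding max_probes_def using lg by simp
  then show "2 \<le> ?N" using lg by linarith
  have "2 * log 2 (real i) \<le> real (?N + 1)" using N by linarith
  then have "2 powr (2 * log 2 (real i)) \<le> 2 powr real (?N + 1)" by simp
  moreover have "2 powr (2 * log 2 (real i)) = (real i)\<^sup>2"
  proof -
    have "2 powr (2 * log 2 (real i)) = (2 powr (log 2 (real i))) powr 2"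
      by (simp add: powr_powr mult.commute)
    then show ?thesis using i4 by simp
  qed
  moreover have "2 powr real (?N + 1) = 2 * 2 ^ ?N"
    by (simp only: powr_realpow) simp
  ultimately show "(real i)\<^sup>2 \<le> 2 * 2 ^ max_probes i" by simp
qed

lemma less_Least_iff_upward_closed:
  fixes P :: "nat \<Rightarrow> bool"
  assumes "P n" and "\<And>a b. a \<le> b \<Longrightarrow> P a \<Longrightarrow> P b"
  shows "s < (LEAST r. P r) \<longleftrightarrow> \<not> P s"
  using assms LeastI[of P n] Least_le[of P s] not_le by blast

lemma less_num_cmp_iff:
  assumes "1 \<le> l" "1 \<le> max_probes i"
  shows "s < num_cmp i l \<longleftrightarrow> s < max_probes i \<and> probe_index i s < int l"
proof -
  let ?P = "\<lambda>r. int l \<le> probe_index i r \<or> max_probes i \<le> r"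
  \<comment> \<open>\<open>r = 0\<close> never satisfies \<open>?P\<close>, so the side condition \<open>1 \<le> r\<close> of \<open>num_cmp\<close> can be dropped\<close>
  have "probe_index i 0 = 0" by (simp add: probe_index_def)
  then have "1 \<le> r" if "?P r" for r
    using that assms by (cases r) auto
  then have "num_cmp i l = (LEAST r. ?P r)"
    unfolding num_cmp_def by (intro arg_cong[where f = Least] ext) blast
  moreover have "s < (LEAST r. ?P r) \<longleftrightarrow> \<not> ?P s"
    by (rule less_Least_iff_upward_closed[of _ "max_probes i"])
      (use probe_index_mono[of _ _ i] in fastforce)+
  ultimately show ?thesis by auto
qed

lemma num_cmp_le_max_probes: "1 \<le> max_probes i \<Longrightarrow> num_cmp i l \<le> max_probes i"
  unfolding num_cmp_def by (intro Least_le) simp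

definition tail_prob :: "nat \<Rightarrow> nat \<Rightarrow> real" where
  "tail_prob i s = (\<Sum>l = 1..i - 1. pos_prob i l * (if s < num_cmp i l then 1 else 0))"

lemma expect_r_eq_sum_tail_prob:
  fixes \<sigma> :: "'a \<Rightarrow> nat" and K :: "'a set"
  assumes "\<And>l. g (num_cmp i l) = (\<Sum>k\<in>K. if \<sigma> k < num_cmp i l then 1 else 0)"
  shows "expect_r i g = (\<Sum>k\<in>K. tail_prob i (\<sigma> k))"
  unfolding expect_r_def tail_prob_def assms sum_distrib_left by (rule sum.swap)

lemma sum_last_positions:
  "m \<le> i \<Longrightarrow> (\<Sum>l = 1..i - 1. if i < l + m then real i - real l else 0) = real m * (real m - 1) / 2"
proof (induction m)
  case 0
  have "(\<Sum>l = 1..i - 1. if i < l then real i - real l else 0) = 0"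
    by (intro sum.neutral) auto
  then show ?case by simp
next
  case (Suc m)
  have split: "(\<lambda>l. if i < l + Suc m then real i - real l else 0) =
        (\<lambda>l. (if i < l + m then real i - real l else 0) + (if l = i - m then real i - real l else 0))"
    using Suc.prems by (auto simp: fun_eq_iff)
  have "(\<Sum>l = 1..i - 1. if l = i - m then real i - real l else 0) = real m"
    using Suc.prems by (cases "m = 0") auto
  then show ?case
    unfolding split sum.distrib using Suc by (simp add: algebra_simps)
qed

lemma real_choose_two: "real (n choose 2) = real n * (real n - 1) / 2"
proof (cases n)
  case (Suc k)
  have "even (n * (n - 1))" by (cases "even n") auto
  then show ?thesis using Suc by (simp add: choose_two real_of_nat_div algebra_simps)
qed simp

lemma tail_prob_eq:
  assumes "2 \<le> i" "s < max_probes i"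
  defines "m \<equiv> real_of_int \<lfloor>probe_frac s * real i\<rfloor>"
  shows "tail_prob i s = m * (m - 1) / (real i * (real i - 1))"
proof -
  define n where "n = nat \<lfloor>probe_frac s * real i\<rfloor>"
  have fl: "\<lfloor>probe_frac s * real i\<rfloor> = int n"
    unfolding n_def using probe_frac_pos[of s] by simp
  have "probe_frac s * real i \<le> real i"
    using probe_frac_le_1[of s] mult_right_mono[of "probe_frac s" 1 "real i"] by simp
  then have "n \<le> i" using fl by linarith
  have "s < num_cmp i l \<longleftrightarrow> i < l + n" if "l \<in> {1..i - 1}" for l
    using less_num_cmp_iff[of l i s] that assms(2) unfolding probe_index_eq fl by auto
  then have "tail_prob i s = (\<Sum>l = 1..i - 1. if i < l + n then real i - real l else 0) / real (i choose 2)"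
    unfolding tail_prob_def pos_prob_def sum_divide_distrib by (intro sum.cong) auto
  then show ?thesis
    unfolding sum_last_positions[OF \<open>n \<le> i\<close>] real_choose_two m_def fl by simp
qed

lemma tail_prob_beyond_max_probes:
  assumes "1 \<le> max_probes i" "max_probes i \<le> s"
  shows "tail_prob i s = 0"
proof -
  have "\<not> s < num_cmp i l" for l
    using num_cmp_le_max_probes[OF assms(1), of l] assms(2) by simp
  then show ?thesis unfolding tail_prob_def by simp
qed

lemma floor_choose2_ratio_le:
  fixes x n :: real
  assumes "0 \<le> x" "x \<le> n" "2 \<le> n"
  defines "m \<equiv> of_int \<lfloor>x\<rfloor>"
  shows "m * (m - 1) / (n * (n - 1)) \<le> (x / n)\<^sup>2"
proof (cases "m = 0")
  case False
  have "0 \<le> \<lfloor>x\<rfloor>" "\<lfloor>x\<rfloor> \<noteq> 0" using assms False unfolding m_def by simp_all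
  then have "1 \<le> m" unfolding m_def by (metis of_int_1 of_int_le_iff int_one_le_iff_zero_less order_less_le)
  moreover have "m \<le> x" unfolding m_def by simp
  ultimately have "m * (m - 1) \<le> x * (x - 1)" by (intro mult_mono) auto
  then have "m * (m - 1) / (n * (n - 1)) \<le> x * (x - 1) / (n * (n - 1))"
    using assms by (intro divide_right_mono) simp_all
  also have "\<dots> \<le> (x / n)\<^sup>2"
  proof -
    have "x * (x - 1) * n \<le> x\<^sup>2 * (n - 1)"
      using assms mult_nonneg_nonpos[of x "x - n"] by (simp add: algebra_simps power2_eq_square)
    then show ?thesis using assms by (simp add: divide_simps power2_eq_square algebra_simps)
  qed
  finally show ?thesis .
qed simp

lemma floor_choose2_ratio_ge:
  fixes x n :: real
  assumes "0 \<le> x" "x \<le> n" "2 \<le> n"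
  defines "m \<equiv> of_int \<lfloor>x\<rfloor>"
  shows "(x / n)\<^sup>2 - 6 * x / n\<^sup>2 \<le> m * (m - 1) / (n * (n - 1))"
proof -
  have main: "x\<^sup>2 - 3 * x \<le> m * (m - 1)"
  proof (cases "1 \<le> x")
    case True
    then have "(x - 1)\<^sup>2 \<le> m\<^sup>2" unfolding m_def by (intro power_mono) linarith+
    then show ?thesis unfolding m_def by (simp add: algebra_simps power2_eq_square) linarith
  next
    case False
    then have "\<lfloor>x\<rfloor> = 0" using assms by (simp add: floor_eq_iff)
    moreover have "x * x \<le> x" using False assms by (simp add: mult_left_le)
    ultimately show ?thesis using assms unfolding m_def by (simp add: power2_eq_square)
  qed
  have "(x / n)\<^sup>2 - 6 * x / n\<^sup>2 = (x\<^sup>2 - 6 * x) / n\<^sup>2"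
    by (simp add: power_divide diff_divide_distrib)
  also have "\<dots> \<le> (x\<^sup>2 - 3 * x) / (n * (n - 1))"
  proof -
    have "(x\<^sup>2 - 6 * x) * (n * (n - 1)) \<le> (x\<^sup>2 - 3 * x) * n\<^sup>2"
    proof -
      have "(x\<^sup>2 - 3 * x) * n\<^sup>2 - (x\<^sup>2 - 6 * x) * (n * (n - 1)) = x * n * (3 * n + x - 6)"
        by (simp add: algebra_simps power2_eq_square)
      moreover have "0 \<le> x * n * (3 * n + x - 6)" using assms by simp
      ultimately show ?thesis by simp
    qed
    then show ?thesis using assms by (simp add: divide_simps)
  qed
  also have "\<dots> \<le> m * (m - 1) / (n * (n - 1))"
    using main assms by (intro divide_right_mono) simp_all
  finally show ?thesis .
qed

lemma tail_prob_approx: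
  assumes "4 \<le> i"
  shows "\<bar>tail_prob i s - (1/2) ^ s\<bar> \<le> 6 * probe_frac s / real i"
proof (cases "s < max_probes i")
  case True
  define x where "x = probe_frac s * real i"
  have i2: "2 \<le> real i" using assms by simp
  have x: "0 \<le> x" "x \<le> real i"
    unfolding x_def using probe_frac_pos[of s] probe_frac_le_1[of s]
      mult_right_mono[of "probe_frac s" 1 "real i"] by simp_all
  have "x / real i = probe_frac s" "6 * x / (real i)\<^sup>2 = 6 * probe_frac s / real i"
    unfolding x_def using i2 by (simp_all add: power2_eq_square)
  then show ?thesis
    using tail_prob_eq[of i s] True assms probe_frac_squared[of s]
      floor_choose2_ratio_le[OF x i2] floor_choose2_ratio_ge[OF x i2] probe_frac_pos[of s] i2
    unfolding x_def by (simp add: abs_le_iff)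
next
  case False
  let ?N = "max_probes i"
  have i4: "4 \<le> real i" using assms by simp
  \<comment> \<open>after \<open>2 lg i\<close> probes the remaining gap is \<open>v\<^sub>s \<le> 2/i\<close>\<close>
  have "probe_frac ?N ^ 2 * (real i)\<^sup>2 \<le> 2"
    using max_probes_bounds(2)[OF assms] by (simp add: probe_frac_squared field_simps)
  then have "(probe_frac ?N * real i)\<^sup>2 \<le> 2\<^sup>2" by (simp add: power_mult_distrib)
  then have "probe_frac ?N * real i \<le> 2"
    by (rule power2_le_imp_le) simp_all
  moreover have "probe_frac s * real i \<le> probe_frac ?N * real i"
    using probe_frac_antimono[of ?N s] False by (simp add: mult_right_mono)
  ultimately have "probe_frac s * real i \<le> 2" by linarith
  then have "probe_frac s \<le> 2 / real i"
    using i4 by (simp add: field_simps)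
  then have "probe_frac s * probe_frac s \<le> probe_frac s * (2 / real i)"
    using less_imp_le[OF probe_frac_pos[of s]] by (rule mult_left_mono)
  also have "\<dots> \<le> 6 * probe_frac s / real i"
    using probe_frac_pos[of s] i4 by (simp add: field_simps)
  finally show ?thesis
    using tail_prob_beyond_max_probes[of i s] max_probes_bounds(1)[OF assms] False
      probe_frac_squared[of s] by (simp add: power2_eq_square)
qed

lemma tail_prob_sum_approx:
  assumes "4 \<le> i"
  shows "\<bar>(\<Sum>k < max_probes i. tail_prob i (2 * k + c)) - (1/2) ^ c * (4/3)\<bar> \<le> 14 / real i"
proof -
  let ?N = "max_probes i"
  have i4: "4 \<le> real i" using assms by simp
  have term_err: "\<bar>tail_prob i (2 * k + c) - (1/2) ^ c * (1/4) ^ k\<bar> \<le> 6 / real i * (1/2) ^ k" for k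
  proof -
    have "probe_frac (2 * k + c) \<le> (1/2) ^ k"
      using probe_frac_antimono[of "2 * k" "2 * k + c"] probe_frac_double[of k] by simp
    then have "6 * probe_frac (2 * k + c) / real i \<le> 6 / real i * (1/2) ^ k"
      using i4 by (simp add: divide_right_mono)
    moreover have "(1/2::real) ^ (2 * k + c) = (1/2) ^ c * (1/4) ^ k"
      by (simp add: power_add power_mult power_one_over)
    ultimately show ?thesis
      using tail_prob_approx[OF assms, of "2 * k + c"] by simp
  qed
  have "\<bar>(\<Sum>k < ?N. tail_prob i (2 * k + c)) - (\<Sum>k < ?N. (1/2) ^ c * (1/4::real) ^ k)\<bar>
      \<le> (\<Sum>k < ?N. \<bar>tail_prob i (2 * k + c) - (1/2) ^ c * (1/4) ^ k\<bar>)"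
    unfolding sum_subtractf[symmetric] by (rule sum_abs)
  also have "\<dots> \<le> (\<Sum>k < ?N. 6 / real i * (1/2) ^ k)"
    by (intro sum_mono term_err)
  also have "\<dots> = 6 / real i * (\<Sum>k < ?N. (1/2) ^ k)"
    by (rule sum_distrib_left[symmetric])
  also have "\<dots> \<le> 6 / real i * 2"
    by (intro mult_left_mono) (simp_all add: sum_gp_strict)
  finally have err: "\<bar>(\<Sum>k < ?N. tail_prob i (2 * k + c)) - (\<Sum>k < ?N. (1/2) ^ c * (1/4::real) ^ k)\<bar>
      \<le> 12 / real i"
    by simp
  have quarter: "(\<Sum>k < ?N. (1/4::real) ^ k) = 4/3 - 4/3 * (1/4) ^ ?N"
    by (subst sum_gp_strict) simp
  have geo: "(\<Sum>k < ?N. (1/2) ^ c * (1/4::real) ^ k) = (1/2) ^ c * (4/3) - (1/2) ^ c * (4/3) * (1/4) ^ ?N"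
    unfolding sum_distrib_left[symmetric] quarter by (simp add: algebra_simps)
  have "(1/4::real) ^ ?N \<le> 1 / real i"
  proof -
    have "4 * real i \<le> (real i)\<^sup>2" using i4 by (simp add: power2_eq_square)
    then have "real i \<le> (2::real) ^ ?N" using max_probes_bounds(2)[OF assms] by linarith
    also have "\<dots> \<le> 4 ^ ?N" by (intro power_mono) auto
    finally show ?thesis using i4 by (simp add: divide_simps)
  qed
  then have "(1/2) ^ c * (4/3) * (1/4::real) ^ ?N \<le> 1 * (4/3) * (1 / real i)"
    by (intro mult_mono) (simp_all add: power_le_one)
  also have "\<dots> \<le> 2 / real i" using i4 by (simp add: field_simps)
  finally have cutoff: "(1/2) ^ c * (4/3) * (1/4::real) ^ ?N \<le> 2 / real i" .
  have "0 \<le> (1/2) ^ c * (4/3) * (1/4::real) ^ ?N" by simp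
  then show ?thesis
    using err cutoff unfolding geo by linarith
qed

lemma floor_half_eq_sum_indicator:
  assumes "n \<le> N"
  shows "real_of_int \<lfloor>real n / 2\<rfloor> = (\<Sum>k < N. if 2 * k + 1 < n then 1 else 0)"
proof -
  have count: "(\<Sum>k < M. if 2 * k + 1 < n then 1 else 0 :: real) = real (min M (n div 2))" for M
    by (induction M) (auto simp: min_def)
  have floor: "\<lfloor>real n / 2\<rfloor> = int (n div 2)"
    using floor_divide_of_nat_eq[of n 2] by simp
  have "n div 2 \<le> N" using assms by simp
  then show ?thesis unfolding count floor by (simp add: min_absorb2)
qed

lemma ceiling_half_eq_sum_indicator:
  assumes "n \<le> N"
  shows "real_of_int \<lceil>real n / 2\<rceil> = (\<Sum>k < N. if 2 * k < n then 1 else 0)"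
proof -
  have count: "(\<Sum>k < M. if 2 * k < n then 1 else 0 :: real) = real (min M ((n + 1) div 2))" for M
    by (induction M) (auto simp: min_def)
  have ceiling: "\<lceil>real n / 2\<rceil> = int ((n + 1) div 2)"
  proof (cases "even n")
    case True
    then show ?thesis by (auto elim!: evenE)
  next
    case False
    then obtain a where a: "n = 2 * a + 1" using oddE by blast
    then have "real n / 2 = real a + 1/2" by simp
    then show ?thesis using a by (simp add: ceiling_eq_iff)
  qed
  have "(n + 1) div 2 \<le> N" using assms by linarith
  then show ?thesis unfolding count ceiling by (simp add: min_absorb2)
qed

theorem lemma3:
  shows "\<exists>C. \<forall>i::nat. even i \<and> 4 \<le> i \<longrightarrow>
           \<bar>expect_r i (\<lambda>r. of_int \<lfloor>real r / 2\<rfloor>) - 2/3\<bar> \<le> C / real i \<and>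
           \<bar>expect_r i (\<lambda>r. of_int \<lceil>real r / 2\<rceil>) - 4/3\<bar> \<le> C / real i"
proof (intro exI[of _ 14] allI impI)
  fix i :: nat
  assume "even i \<and> 4 \<le> i"
  then have i4: "4 \<le> i" by simp
  then have N: "1 \<le> max_probes i" using max_probes_bounds(1) by fastforce
  have "expect_r i (\<lambda>r. of_int \<lfloor>real r / 2\<rfloor>) = (\<Sum>k < max_probes i. tail_prob i (2 * k + 1))"
    by (rule expect_r_eq_sum_tail_prob)
      (rule floor_half_eq_sum_indicator[OF num_cmp_le_max_probes[OF N]])
  moreover have "expect_r i (\<lambda>r. of_int \<lceil>real r / 2\<rceil>) = (\<Sum>k < max_probes i. tail_prob i (2 * k))"
    by (rule expect_r_eq_sum_tail_prob)
      (rule ceiling_half_eq_sum_indicator[OF num_cmp_le_max_probes[OF N]])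
  ultimately show "\<bar>expect_r i (\<lambda>r. of_int \<lfloor>real r / 2\<rfloor>) - 2/3\<bar> \<le> 14 / real i \<and>
           \<bar>expect_r i (\<lambda>r. of_int \<lceil>real r / 2\<rceil>) - 4/3\<bar> \<le> 14 / real i"
    using tail_prob_sum_approx[OF i4, of 1] tail_prob_sum_approx[OF i4, of 0] by simp
qed

end
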